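(* Fix integers $k,N\ge1$. For each prime $p$ let $\Omega(p)$ be a subset of $(\mathbb{Z}/p^N\mathbb{Z})^k$. For $x>0$ and $m\in\mathbb{Z}^k$ put $P(x;m):=\#\{p\le x\text{ prime}: m\bmod p^N\in\Omega(p)\}$ and $P(x):=\sum_{p\le x}\#\Omega(p)\,p^{-Nk}$. Let $B=\prod_{j=1}^k[M_j,M_j+N_j]\subset\mathbb{R}^k$ be a box with $N_j\ge x^{2N}$ for all $j$, and let $V(B)=\prod_jN_j$. Then \[\sum_{m\in B\cap\mathbb{Z}^k}\big(P(x;m)-P(x)\big)^2\le c_{k,N}\,V(B)\,P(x),\] where $c_{k,N}>0$ is a constant depending only on $k$ and $N$. *)

theory Defs
  imports "HOL-Computational_Algebra.Primes" Complex_Main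
begin

text \<open>Vectors in Z^k are modelled as functions nat => int that vanish at indices >= k.
  (Z/qZ)^k is modelled by its canonical representatives: vectors with entries in [0,q).\<close>

definition residue_vecs :: "nat \<Rightarrow> int \<Rightarrow> (nat \<Rightarrow> int) set" where
  "residue_vecs k q = {v. (\<forall>j<k. 0 \<le> v j \<and> v j < q) \<and> (\<forall>j\<ge>k. v j = 0)}"

definition vec_mod :: "nat \<Rightarrow> int \<Rightarrow> (nat \<Rightarrow> int) \<Rightarrow> (nat \<Rightarrow> int)" where
  "vec_mod k q m = (\<lambda>j. if j < k then m j mod q else 0)"

definition Pcount :: "nat \<Rightarrow> nat \<Rightarrow> (nat \<Rightarrow> (nat \<Rightarrow> int) set) \<Rightarrow> real \<Rightarrow> (nat \<Rightarrow> int) \<Rightarrow> nat" where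
  "Pcount k N \<Omega> x m = card {p::nat. prime p \<and> real p \<le> x \<and> vec_mod k (int p ^ N) m \<in> \<Omega> p}"

definition Pexp :: "nat \<Rightarrow> nat \<Rightarrow> (nat \<Rightarrow> (nat \<Rightarrow> int) set) \<Rightarrow> real \<Rightarrow> real" where
  "Pexp k N \<Omega> x = (\<Sum>p\<in>{p::nat. prime p \<and> real p \<le> x}. real (card (\<Omega> p)) / real p ^ (N * k))"

definition box_points :: "nat \<Rightarrow> (nat \<Rightarrow> real) \<Rightarrow> (nat \<Rightarrow> real) \<Rightarrow> (nat \<Rightarrow> int) set" where
  "box_points k M L = {m. (\<forall>j<k. M j \<le> real_of_int (m j) \<and> real_of_int (m j) \<le> M j + L j) \<and> (\<forall>j\<ge>k. m j = 0)}"

end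

theory Submission
  imports Defs "HOL-Number_Theory.Cong" "HOL-Library.FuncSet"
begin

text \<open>Replace the box by a smooth product weight on a larger box. In each coordinate it is a sum
  of Fejer kernels of degree \<open>< K\<close>, where \<open>K = \<Prod>\<^sub>p p\<^sup>N\<close>, and period a multiple of \<open>K\<close>; such a
  weight is \<open>\<ge> 1/6\<close> on the interval, has total mass \<open>O(L)\<close>, and, having no Fourier modes
  in common with residue classes modulo a divisor \<open>D \<le> L\<close> of \<open>K\<close> apart from the constant
  one, gives each such class exactly the fraction \<open>1/D\<close> of its mass. Since
  \<open>p\<^sup>N q\<^sup>N \<le> x\<^sup>2\<^sup>N \<le> L\<close>, the Chinese remainder theorem makes the events
  \<open>m mod p\<^sup>N \<in> \<Omega>(p)\<close> exactly pairwise independent under the weight, with probabilities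
  \<open>\<omega>(p) = #\<Omega>(p) / p\<^sup>N\<^sup>k\<close>. So the weighted variance of \<open>P(x;m)\<close> is the total mass times
  \<open>\<Sum>\<^sub>p \<omega>(p)(1 - \<omega>(p)) \<le> P(x)\<close>, and dropping the weight outside the box costs \<open>6\<^sup>k\<close>.\<close>

section \<open>The Fejer kernel\<close>

lemma sum_cos_full_period:
  fixes T :: nat and n a :: int and \<phi> :: real
  assumes T: "T > 0"
  shows "(\<Sum>t\<in>{a..<a + int T}. cos (2*pi*n*t/T + \<phi>))
    = (if int T dvd n then T * cos \<phi> else 0)"
proof -
  have "{a..<a + int T} = (\<lambda>u. a + int u) ` {..<T}"
  proof (rule set_eqI, rule iffI)
    fix t assume "t \<in> {a..<a + int T}"
    then have "t = a + int (nat (t - a))" "nat (t - a) < T" by auto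
    then show "t \<in> (\<lambda>u. a + int u) ` {..<T}" by blast
  qed auto
  then have "(\<Sum>t\<in>{a..<a + int T}. cos (2*pi*n*t/T + \<phi>))
      = (\<Sum>u<T. cos (2*pi*n*(a + int u)/T + \<phi>))"
    by (simp add: sum.reindex inj_on_def)
  also have "\<dots> = (if int T dvd n then T * cos \<phi> else 0)"
  proof (cases "int T dvd n")
    case True
    then obtain c where c: "n = int T * c" by blast
    have "cos (2*pi*n*(a + int u)/T + \<phi>) = cos \<phi>" for u
    proof -
      have "2*pi*n*(a + int u)/T + \<phi> = \<phi> + 2*pi * of_int (c * (a + int u))"
        using T by (simp add: c field_simps)
      then show ?thesis by (simp only: cos_add cos_int_2pin sin_int_2pin)
    qed
    then show ?thesis using True by simp
  next
    case False
    define z where "z = cis (2*pi*n/T)"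
    have "z \<noteq> 1"
    proof
      assume "z = 1"
      then have "cos (2*pi*n/T) = 1" unfolding z_def by (metis cis.sel(1) one_complex.sel(1))
      then obtain m :: int where "2*pi*n/T = m * 2 * pi" by (auto simp: cos_one_2pi_int)
      then have "real_of_int n = real_of_int (m * int T)" using T by (simp add: field_simps)
      then show False using False by (simp only: of_int_eq_iff) simp
    qed
    moreover have "z ^ T = 1" unfolding z_def using T by (simp add: DeMoivre)
    ultimately have "(\<Sum>u<T. z ^ u) = 0" by (simp add: sum_gp_strict)
    moreover have "(\<Sum>u<T. cis (2*pi*n*(a + int u)/T + \<phi>))
        = cis (2*pi*n*a/T + \<phi>) * (\<Sum>u<T. z ^ u)"
      unfolding sum_distrib_left z_def by (rule sum.cong) (auto simp: DeMoivre cis_mult field_simps)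
    ultimately have "Re (\<Sum>u<T. cis (2*pi*n*(a + int u)/T + \<phi>)) = 0" by simp
    then show ?thesis using False by (simp add: Re_sum)
  qed
  finally show ?thesis .
qed

lemma of_bool_mod_eq_sum_cos:
  fixes D :: nat and t \<gamma> :: int
  assumes D: "D > 0" and \<gamma>: "0 \<le> \<gamma>" "\<gamma> < int D"
  shows "of_bool (t mod int D = \<gamma>) = (\<Sum>r\<in>{0..<int D}. cos (2*pi*(t - \<gamma>)*r/D)) / D"
proof -
  have "t mod int D = \<gamma> \<longleftrightarrow> int D dvd t - \<gamma>"
    using \<gamma> by (simp add: mod_eq_dvd_iff[of t "int D" \<gamma>, symmetric])
  then show ?thesis
    using sum_cos_full_period[OF D, of "t - \<gamma>" 0 0] D by (simp add: mult.commute mult.left_commute)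
qed

lemma cos_ge_half:
  fixes y :: real assumes "0 \<le> y" "y \<le> pi/3" shows "cos y \<ge> 1/2"
proof -
  have "cos (pi/3) \<le> cos y" using assms pi_gt_zero by (subst cos_mono_le_eq) auto
  then show ?thesis by (simp add: cos_60)
qed

text \<open>The Fejer kernel \<open>\<bar>\<Sum>l<K. e(l t / T)\<bar>\<^sup>2 / (T K)\<close> on \<open>\<int>/T\<int>\<close>, written via its
  Fourier expansion: a nonnegative trigonometric polynomial of degree \<open>< K\<close>.\<close>
definition fejer :: "nat \<Rightarrow> nat \<Rightarrow> int \<Rightarrow> real" where
  "fejer K T t = (\<Sum>l<K. \<Sum>l'<K. cos (2*pi*(int l - int l')*t/T)) / (T*K)"

lemma fejer_nonneg: "fejer K T t \<ge> 0"
proof -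
  define \<theta> where "\<theta> = 2*pi*t/T"
  have "cos (2*pi*(int l - int l')*t/T) = cos (\<theta>*l) * cos (\<theta>*l') + sin (\<theta>*l) * sin (\<theta>*l')" for l l'
  proof -
    have "2*pi*(int l - int l')*t/T = \<theta>*l - \<theta>*l'"
      by (cases "T = 0") (simp_all add: \<theta>_def field_simps)
    then show ?thesis by (simp add: cos_diff)
  qed
  then have "(\<Sum>l<K. \<Sum>l'<K. cos (2*pi*(int l - int l')*t/T))
      = (\<Sum>l<K. cos (\<theta>*l))\<^sup>2 + (\<Sum>l<K. sin (\<theta>*l))\<^sup>2"
    by (simp add: power2_eq_square sum_product sum.distrib)
  then show ?thesis unfolding fejer_def by simp
qed

lemma fejer_ge:
  assumes K: "K > 0" and R: "R > 0" and T: "T = 6*K*R" and t: "\<bar>t\<bar> \<le> int R"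
  shows "fejer K T t \<ge> real K / (2 * real T)"
proof -
  have cos_ge: "cos (2*pi*(int l - int l')*t/T) \<ge> 1/2" if "l < K" "l' < K" for l l'
  proof -
    have "\<bar>int l - int l'\<bar> * \<bar>t\<bar> \<le> int K * int R"
      using that t by (intro mult_mono) auto
    then have "real_of_int (\<bar>int l - int l'\<bar> * \<bar>t\<bar>) \<le> real_of_int (int K * int R)"
      by (simp only: of_int_le_iff)
    then have freq_bound: "\<bar>real_of_int (int l - int l') * t\<bar> \<le> real K * real R"
      by (simp add: abs_mult)
    have "\<bar>2*pi*(int l - int l')*t/T\<bar> = 2*pi*\<bar>real_of_int (int l - int l') * t\<bar>/T"
      by (simp add: abs_mult abs_divide)
    also have "\<dots> \<le> 2*pi*(real K * real R)/T"
      using freq_bound by (intro divide_right_mono mult_left_mono) auto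
    also have "\<dots> = pi/3" using T K R by (simp add: field_simps)
    finally have "cos \<bar>2*pi*(int l - int l')*t/T\<bar> \<ge> 1/2" by (intro cos_ge_half) auto
    then show ?thesis by (simp only: cos_abs_real)
  qed
  have "real K * real K / 2 \<le> (\<Sum>l<K. \<Sum>l'<K. cos (2*pi*(int l - int l')*t/T))"
  proof -
    have "(\<Sum>l<K. \<Sum>l'<K. (1/2::real)) \<le> (\<Sum>l<K. \<Sum>l'<K. cos (2*pi*(int l - int l')*t/T))"
      using cos_ge by (intro sum_mono) auto
    then show ?thesis by simp
  qed
  then have "real K * real K / 2 / (T*K) \<le> fejer K T t"
    unfolding fejer_def using T K R by (intro divide_right_mono) auto
  then show ?thesis using K by (simp add: field_simps)
qed

lemma dvd_abs_less_imp_zero: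
  fixes x d :: int
  assumes "d dvd x" "\<bar>x\<bar> < \<bar>d\<bar>" shows "x = 0"
  using assms dvd_imp_le_int by force

lemma sum_cos_mul_cos_full_period:
  fixes T D E :: nat and d r a i \<gamma> :: int
  assumes TE: "T = D * E" and D: "D > 0" and d: "\<bar>d\<bar> < int E" and r: "0 \<le> r" "r < int D"
  shows "(\<Sum>t\<in>{a..<a + int T}. cos (2*pi*d*(t - i)/T) * cos (2*pi*(t - \<gamma>)*r/D))
       = (if d = 0 \<and> r = 0 then real T else 0)"
proof -
  have E: "E > 0" using d by simp
  have T: "T > 0" using TE D E by simp
  define n1 where "n1 = d - r * int E"
  define n2 where "n2 = d + r * int E"
  define \<phi>1 where "\<phi>1 = - 2*pi*(d*i - r*E*\<gamma>)/T"
  define \<phi>2 where "\<phi>2 = - 2*pi*(d*i + r*E*\<gamma>)/T"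
  have prod_to_sum: "cos (2*pi*d*(t - i)/T) * cos (2*pi*(t - \<gamma>)*r/D)
      = (cos (2*pi*n1*t/T + \<phi>1) + cos (2*pi*n2*t/T + \<phi>2)) / 2" for t :: int
  proof -
    have rT: "real T = real D * real E" using TE by simp
    have "2*pi*d*(t - i)/T - 2*pi*(t - \<gamma>)*r/D = 2*pi*n1*t/T + \<phi>1"
      "2*pi*d*(t - i)/T + 2*pi*(t - \<gamma>)*r/D = 2*pi*n2*t/T + \<phi>2"
      unfolding n1_def n2_def \<phi>1_def \<phi>2_def using D E rT by (simp_all add: field_simps)
    then show ?thesis unfolding cos_times_cos by simp
  qed
  have dvd_iff: "int T dvd d + s * r * int E \<longleftrightarrow> d = 0 \<and> r = 0" if s: "s = 1 \<or> s = -1" for s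
  proof
    assume h: "int T dvd d + s * r * int E"
    moreover have "int E dvd int T" using TE by simp
    ultimately have "int E dvd d + s * r * int E" by (blast intro: dvd_trans)
    then have "int E dvd d" by (simp add: dvd_add_left_iff)
    then have d0: "d = 0" using d dvd_abs_less_imp_zero by fastforce
    then have "int D * int E dvd (s * r) * int E" using h TE by (simp add: mult.commute)
    then have "int D dvd r" using E s by auto
    then have "r = 0" using r dvd_abs_less_imp_zero by fastforce
    with d0 show "d = 0 \<and> r = 0" ..
  qed simp
  have "int T dvd n1 \<longleftrightarrow> d = 0 \<and> r = 0" "int T dvd n2 \<longleftrightarrow> d = 0 \<and> r = 0"
    using dvd_iff[of "-1"] dvd_iff[of 1] unfolding n1_def n2_def by simp_all
  moreover have "d = 0 \<and> r = 0 \<Longrightarrow> \<phi>1 = 0 \<and> \<phi>2 = 0" by (simp add: \<phi>1_def \<phi>2_def)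
  ultimately show ?thesis
    unfolding prod_to_sum sum_divide_distrib[symmetric] sum.distrib sum_cos_full_period[OF T]
    by auto
qed

text \<open>The Fourier coefficients of \<open>fejer K T\<close> live on frequencies \<open>< K\<close>, while those of
  a residue class modulo \<open>D\<close> live on multiples of \<open>T/D \<ge> K\<close>; only frequency \<open>0\<close> is shared.\<close>
lemma fejer_sum_residue_class:
  fixes K T D :: nat and a i \<gamma> :: int
  assumes K: "K > 0" and D: "D > 0" and DT: "D dvd T" and KD: "K * D \<le> T"
    and \<gamma>: "0 \<le> \<gamma>" "\<gamma> < int D"
  shows "(\<Sum>t\<in>{a..<a + int T}. fejer K T (t - i) * of_bool (t mod int D = \<gamma>)) = 1 / D"
proof -
  obtain E where TE: "T = D * E" using DT by blast
  have KE: "K \<le> E" using KD TE D by simp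
  have T: "T > 0" using TE D K KE by simp
  define c where "c = real T * real K * real D"
  have "(\<Sum>t\<in>{a..<a + int T}. fejer K T (t - i) * of_bool (t mod int D = \<gamma>))
     = (\<Sum>t\<in>{a..<a + int T}. \<Sum>l<K. \<Sum>l'<K. \<Sum>r\<in>{0..<int D}.
          cos (2*pi*(int l - int l')*(t - i)/T) * cos (2*pi*(t - \<gamma>)*r/D) / c)"
    unfolding fejer_def of_bool_mod_eq_sum_cos[OF D \<gamma>] c_def
    by (simp add: sum_distrib_left sum_distrib_right sum_divide_distrib
        mult.commute mult.left_commute)
  also have "\<dots> = (\<Sum>l<K. \<Sum>l'<K. \<Sum>r\<in>{0..<int D}.
          (\<Sum>t\<in>{a..<a + int T}. cos (2*pi*(int l - int l')*(t - i)/T) * cos (2*pi*(t - \<gamma>)*r/D)) / c)"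
    by (simp add: sum.swap[of _ "{a..<a + int T}"] sum_divide_distrib)
  also have "\<dots> = (\<Sum>l<K. \<Sum>l'<K. \<Sum>r\<in>{0..<int D}.
      if l' = l then (if r = 0 then real T / c else 0) else 0)"
  proof (intro sum.cong refl)
    fix l l' r assume "l \<in> {..<K}" "l' \<in> {..<K}" "r \<in> {0..<int D}"
    moreover from this have "\<bar>int l - int l'\<bar> < int E" using KE by auto
    ultimately show "(\<Sum>t\<in>{a..<a + int T}.
          cos (2*pi*(int l - int l')*(t - i)/T) * cos (2*pi*(t - \<gamma>)*r/D)) / c
       = (if l' = l then (if r = 0 then real T / c else 0) else 0)"
      using sum_cos_mul_cos_full_period[OF TE D,
          where d = "int l - int l'" and r = r and a = a and i = i and \<gamma> = \<gamma>]
      by auto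
  qed
  also have "\<dots> = (\<Sum>l<K. real T / c)"
    using D by (intro sum.cong refl) (simp add: sum.delta' sum.If_cases)
  also have "\<dots> = 1 / D" unfolding c_def using K T D by simp
  finally show ?thesis .
qed

section \<open>Equidistributed majorants of intervals\<close>

definition equidistributed_mod :: "int set \<Rightarrow> (int \<Rightarrow> real) \<Rightarrow> real \<Rightarrow> int \<Rightarrow> bool" where
  "equidistributed_mod I w c D \<longleftrightarrow>
     (\<forall>\<gamma>\<in>{0..<D}. (\<Sum>t\<in>I. w t * of_bool (t mod D = \<gamma>)) = c / D)"

lemma equidistributed_mod_one_iff: "equidistributed_mod I w c 1 \<longleftrightarrow> (\<Sum>t\<in>I. w t) = c"
  by (auto simp: equidistributed_mod_def)

text \<open>The weight is a sum of Fejer kernels of period \<open>T = 6 K R\<close>, \<open>R = \<lceil>L\<rceil>\<close>, centred at the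
  integers of the interval widened by \<open>R\<close> on both sides: every point of the interval sees
  \<open>2R + 1\<close> kernels each worth \<open>\<ge> 1/(12 R)\<close> (\<open>fejer_ge\<close>), and \<open>fejer_sum_residue_class\<close>
  makes each kernel exactly equidistributed modulo every \<open>D \<le> R\<close> dividing \<open>K\<close>.\<close>
lemma interval_equidistributed_majorant:
  fixes a L :: real and K :: nat
  assumes L: "L \<ge> 1" and K: "K > 0"
  obtains I :: "int set" and w :: "int \<Rightarrow> real" and c :: real
  where "finite I" "\<And>t. w t \<ge> 0" "0 \<le> c" "c \<le> 6 * L"
    "\<And>t. a \<le> of_int t \<Longrightarrow> of_int t \<le> a + L \<Longrightarrow> t \<in> I \<and> w t \<ge> 1/6"
    "\<And>D. D > 0 \<Longrightarrow> D dvd int K \<Longrightarrow> of_int D \<le> L \<Longrightarrow> equidistributed_mod I w c D"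
proof -
  define R where "R = nat \<lceil>L\<rceil>"
  define T where "T = 6 * K * R"
  define I where "I = {\<lceil>a\<rceil>..<\<lceil>a\<rceil> + int T}"
  define J where "J = {\<lceil>a\<rceil> - int R..\<lfloor>a + L\<rfloor> + int R}"
  define w where "w t = (\<Sum>i\<in>J. fejer K T (t - i))" for t
  have R: "L \<le> R" "R \<le> L + 1" "R > 0" unfolding R_def using L by linarith+
  have "real (6 * R) \<le> real T" unfolding T_def using K by (simp only: of_nat_le_iff) simp
  then have LT: "L < real T" using R by simp
  show ?thesis
  proof (rule that[of I w "card J"])
    show "finite I" unfolding I_def by simp
    show "w t \<ge> 0" for t unfolding w_def by (intro sum_nonneg fejer_nonneg)
    show "0 \<le> real (card J)" by simp
    have "\<lfloor>a + L\<rfloor> \<ge> \<lceil>a\<rceil> - 1" using L by linarith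
    then have "real (card J) = \<lfloor>a + L\<rfloor> - \<lceil>a\<rceil> + 2 * real R + 1" unfolding J_def by simp
    then show "real (card J) \<le> 6 * L" using R L by linarith
  next
    fix t :: int assume t: "a \<le> of_int t" "of_int t \<le> a + L"
    then have "t \<in> I" unfolding I_def using LT by (simp add: ceiling_le_iff) linarith
    have "{t - int R..t + int R} \<subseteq> J"
      unfolding J_def using t by (auto simp: ceiling_le_iff le_floor_iff)
    then have "(\<Sum>i\<in>{t - int R..t + int R}. fejer K T (t - i)) \<le> w t"
      unfolding w_def J_def by (intro sum_mono2 fejer_nonneg) auto
    moreover have "(\<Sum>i\<in>{t - int R..t + int R}. real K / (2 * real T))
        \<le> (\<Sum>i\<in>{t - int R..t + int R}. fejer K T (t - i))"
      using K R by (intro sum_mono fejer_ge) (auto simp: T_def)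
    moreover have "(\<Sum>i\<in>{t - int R..t + int R}. real K / (2 * real T)) \<ge> 1/6"
      using K R by (simp add: T_def field_simps)
    ultimately have "w t \<ge> 1/6" by linarith
    with \<open>t \<in> I\<close> show "t \<in> I \<and> w t \<ge> 1/6" ..
  next
    fix D :: int assume D: "D > 0" "D dvd int K" "of_int D \<le> L"
    show "equidistributed_mod I w (card J) D"
      unfolding equidistributed_mod_def
    proof
      fix \<gamma> assume \<gamma>: "\<gamma> \<in> {0..<D}"
      have "(\<Sum>t\<in>I. w t * of_bool (t mod D = \<gamma>))
          = (\<Sum>i\<in>J. \<Sum>t\<in>I. fejer K T (t - i) * of_bool (t mod int (nat D) = \<gamma>))"
        unfolding w_def sum_distrib_right using D by (subst sum.swap) simp
      also have "\<dots> = (\<Sum>i\<in>J. 1 / real (nat D))"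
      proof (intro sum.cong refl)
        have "nat D dvd K" "nat D \<le> R" using D R by (simp_all add: nat_dvd_iff le_nat_iff)
        then have "nat D dvd T" "K * nat D \<le> T" by (simp_all add: T_def)
        then show "(\<Sum>t\<in>I. fejer K T (t - i) * of_bool (t mod int (nat D) = \<gamma>))
            = 1 / real (nat D)" for i
          unfolding I_def using K D \<gamma> by (intro fejer_sum_residue_class) auto
      qed
      finally show "(\<Sum>t\<in>I. w t * of_bool (t mod D = \<gamma>)) = real (card J) / of_int D"
        using D by simp
    qed
  qed
qed

section \<open>Integer vectors and their residues\<close>

definition vecs_in :: "nat \<Rightarrow> (nat \<Rightarrow> int set) \<Rightarrow> (nat \<Rightarrow> int) set" where
  "vecs_in k I = {m. (\<forall>j<k. m j \<in> I j) \<and> (\<forall>j\<ge>k. m j = 0)}"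

lemma bij_betw_PiE_vecs_in:
  "bij_betw (\<lambda>g j. if j < k then g j else 0) (PiE {..<k} I) (vecs_in k I)"
proof (rule bij_betw_byWitness[where f' = "\<lambda>m. restrict m {..<k}"])
  show "\<forall>g\<in>PiE {..<k} I. restrict (\<lambda>j. if j < k then g j else 0) {..<k} = g"
    using PiE_arb by fastforce
  show "\<forall>m\<in>vecs_in k I. (\<lambda>j. if j < k then restrict m {..<k} j else 0) = m"
    by (auto simp: vecs_in_def)
  show "(\<lambda>g j. if j < k then g j else 0) ` PiE {..<k} I \<subseteq> vecs_in k I"
    by (rule image_subsetI) (simp add: vecs_in_def PiE_mem)
  show "(\<lambda>m. restrict m {..<k}) ` vecs_in k I \<subseteq> PiE {..<k} I"
    by (rule image_subsetI) (simp add: vecs_in_def restrict_PiE_iff)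
qed

lemma finite_vecs_in: "(\<And>j. j < k \<Longrightarrow> finite (I j)) \<Longrightarrow> finite (vecs_in k I)"
  using bij_betw_finite[OF bij_betw_PiE_vecs_in] finite_PiE[of "{..<k}" I] by simp

lemma sum_vecs_in_prod:
  fixes h :: "nat \<Rightarrow> int \<Rightarrow> 'a :: comm_semiring_1"
  assumes "\<And>j. j < k \<Longrightarrow> finite (I j)"
  shows "(\<Sum>m\<in>vecs_in k I. \<Prod>j<k. h j (m j)) = (\<Prod>j<k. \<Sum>t\<in>I j. h j t)"
proof -
  have "(\<Prod>j<k. \<Sum>t\<in>I j. h j t) = (\<Sum>g\<in>PiE {..<k} I. \<Prod>j<k. h j (g j))"
    using assms by (intro prod_sum_PiE) auto
  also have "\<dots> = (\<Sum>m\<in>vecs_in k I. \<Prod>j<k. h j (m j))"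
    by (subst sum.reindex_bij_betw[OF bij_betw_PiE_vecs_in, symmetric]) simp
  finally show ?thesis ..
qed

lemma residue_vecs_eq_vecs_in: "residue_vecs k q = vecs_in k (\<lambda>_. {0..<q})"
  unfolding residue_vecs_def vecs_in_def by auto

lemma finite_residue_vecs: "finite (residue_vecs k q)"
  unfolding residue_vecs_eq_vecs_in by (rule finite_vecs_in) simp

lemma vec_mod_eq_iff:
  assumes "\<forall>j\<ge>k. \<alpha> j = 0"
  shows "vec_mod k q m = \<alpha> \<longleftrightarrow> (\<forall>j<k. m j mod q = \<alpha> j)"
  using assms by (auto simp: vec_mod_def fun_eq_iff)

lemma vec_mod_eq_vec_mod_iff:
  "vec_mod k q m = vec_mod k q x \<longleftrightarrow> (\<forall>j<k. m j mod q = x j mod q)"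
  by (auto simp: vec_mod_def fun_eq_iff)

lemma vec_mod_residue_vecs: "\<alpha> \<in> residue_vecs k q \<Longrightarrow> vec_mod k q \<alpha> = \<alpha>"
  by (auto simp: vec_mod_def residue_vecs_def fun_eq_iff)

lemma vec_mod_in_residue_vecs: "q > 0 \<Longrightarrow> vec_mod k q m \<in> residue_vecs k q"
  by (simp add: vec_mod_def residue_vecs_def)

lemma mod_and_mod_eq_iff_mod_mult:
  fixes P Q t x :: int
  assumes "coprime P Q"
  shows "t mod P = x mod P \<and> t mod Q = x mod Q \<longleftrightarrow> t mod (P * Q) = x mod (P * Q)"
proof -
  have "P dvd t - x \<and> Q dvd t - x \<longleftrightarrow> P * Q dvd t - x"
    using assms divides_mult[of P "t - x" Q] dvd_mult_left[of P Q] dvd_mult_right[of P Q] by blast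
  then show ?thesis by (simp only: mod_eq_dvd_iff)
qed

lemma vec_mod_and_vec_mod_eq_iff:
  assumes "coprime P Q"
  shows "vec_mod k P m = vec_mod k P x \<and> vec_mod k Q m = vec_mod k Q x
    \<longleftrightarrow> vec_mod k (P * Q) m = vec_mod k (P * Q) x"
  by (auto simp: vec_mod_eq_vec_mod_iff mod_and_mod_eq_iff_mod_mult[OF assms, symmetric])

lemma vec_mod_chinese_remainder:
  fixes P Q :: int
  assumes "coprime P Q"
  obtains x where "vec_mod k P x = vec_mod k P \<alpha>" "vec_mod k Q x = vec_mod k Q \<beta>"
proof -
  have "\<forall>j. \<exists>y. [y = \<alpha> j] (mod P) \<and> [y = \<beta> j] (mod Q)"
    using binary_chinese_remainder_int[OF assms] by blast
  then obtain x where "\<And>j. [x j = \<alpha> j] (mod P) \<and> [x j = \<beta> j] (mod Q)" by metis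
  then show ?thesis by (intro that[of x]) (simp_all add: vec_mod_eq_vec_mod_iff cong_def)
qed

lemma prod_of_bool_lessThan:
  "(\<Prod>j<(k::nat). of_bool (P j) :: 'a :: comm_semiring_1) = of_bool (\<forall>j<k. P j)"
  by (induction k) (auto simp: less_Suc_eq)

lemma of_bool_mem_eq_sum:
  "finite A \<Longrightarrow> of_bool (x \<in> A) = (\<Sum>a\<in>A. of_bool (x = a) :: 'b :: comm_semiring_1)"
  by (simp add: sum.delta of_bool_def)

section \<open>The variance bound\<close>

lemma weighted_variance_pairwise_independent:
  fixes w :: "'a \<Rightarrow> real" and X :: "'b \<Rightarrow> 'a \<Rightarrow> bool" and \<omega> :: "'b \<Rightarrow> real"
  assumes S: "finite S" and total: "(\<Sum>m\<in>W. w m) = V"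
    and single: "\<And>p. p \<in> S \<Longrightarrow> (\<Sum>m\<in>W. w m * of_bool (X p m)) = V * \<omega> p"
    and pair: "\<And>p q. p \<in> S \<Longrightarrow> q \<in> S \<Longrightarrow> p \<noteq> q \<Longrightarrow>
      (\<Sum>m\<in>W. w m * of_bool (X p m \<and> X q m)) = V * \<omega> p * \<omega> q"
  shows "(\<Sum>m\<in>W. w m * (\<Sum>p\<in>S. of_bool (X p m) - \<omega> p)\<^sup>2) = V * (\<Sum>p\<in>S. \<omega> p * (1 - \<omega> p))"
proof -
  have cov: "(\<Sum>m\<in>W. w m * ((of_bool (X p m) - \<omega> p) * (of_bool (X q m) - \<omega> q)))
      = (if p = q then V * (\<omega> p * (1 - \<omega> p)) else 0)" if "p \<in> S" "q \<in> S" for p q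
  proof -
    have joint: "(\<Sum>m\<in>W. w m * of_bool (X p m \<and> X q m)) = (if p = q then V * \<omega> p else V * \<omega> p * \<omega> q)"
      using that by (cases "p = q") (simp_all add: single pair)
    have "(\<Sum>m\<in>W. w m * ((of_bool (X p m) - \<omega> p) * (of_bool (X q m) - \<omega> q)))
        = (\<Sum>m\<in>W. w m * of_bool (X p m \<and> X q m)) - \<omega> q * (\<Sum>m\<in>W. w m * of_bool (X p m))
          - \<omega> p * (\<Sum>m\<in>W. w m * of_bool (X q m)) + \<omega> p * \<omega> q * (\<Sum>m\<in>W. w m)"
      by (simp add: algebra_simps of_bool_conj sum.distrib sum_subtractf sum_distrib_left)
    also have "\<dots> = (if p = q then V * (\<omega> p * (1 - \<omega> p)) else 0)"
      unfolding joint single[OF that(1)] single[OF that(2)] total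
      by (simp add: algebra_simps)
    finally show ?thesis .
  qed
  have "(\<Sum>m\<in>W. w m * (\<Sum>p\<in>S. of_bool (X p m) - \<omega> p)\<^sup>2)
      = (\<Sum>p\<in>S. \<Sum>q\<in>S. \<Sum>m\<in>W. w m * ((of_bool (X p m) - \<omega> p) * (of_bool (X q m) - \<omega> q)))"
    unfolding power2_eq_square sum_product by (simp only: sum_distrib_left sum.swap[where A = W])
  also have "\<dots> = (\<Sum>p\<in>S. V * (\<omega> p * (1 - \<omega> p)))"
    using cov S by (simp add: sum.delta cong: sum.cong)
  finally show ?thesis by (simp add: sum_distrib_left)
qed

lemma sum_le_mult_weighted_sum:
  fixes u G :: "'a \<Rightarrow> real"
  assumes "finite W" "B \<subseteq> W" "C \<ge> 0"
    and "\<And>m. m \<in> W \<Longrightarrow> u m \<ge> 0" "\<And>m. m \<in> B \<Longrightarrow> 1 \<le> C * u m" "\<And>m. G m \<ge> 0"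
  shows "(\<Sum>m\<in>B. G m) \<le> C * (\<Sum>m\<in>W. u m * G m)"
proof -
  have "(\<Sum>m\<in>B. G m) \<le> (\<Sum>m\<in>B. C * (u m * G m))"
  proof (rule sum_mono)
    fix m assume "m \<in> B"
    then have "1 * G m \<le> (C * u m) * G m" using assms(5,6) by (intro mult_right_mono) auto
    then show "G m \<le> C * (u m * G m)" by (simp only: mult.assoc mult_1)
  qed
  also have "\<dots> \<le> (\<Sum>m\<in>W. C * (u m * G m))"
    using assms by (intro sum_mono2) auto
  finally show ?thesis by (simp add: sum_distrib_left)
qed

lemma sum_product_weight_vec_mod_eq:
  fixes w :: "nat \<Rightarrow> int \<Rightarrow> real"
  assumes fin: "\<And>j. j < k \<Longrightarrow> finite (I j)"
    and equi: "\<And>j. j < k \<Longrightarrow> equidistributed_mod (I j) (w j) (c j) D"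
    and \<alpha>: "\<alpha> \<in> residue_vecs k D"
  shows "(\<Sum>m\<in>vecs_in k I. (\<Prod>j<k. w j (m j)) * of_bool (vec_mod k D m = \<alpha>))
    = (\<Prod>j<k. c j) / of_int D ^ k"
proof -
  have "of_bool (vec_mod k D m = \<alpha>) = (\<Prod>j<k. of_bool (m j mod D = \<alpha> j) :: real)" for m
    using \<alpha> by (simp add: prod_of_bool_lessThan vec_mod_eq_iff residue_vecs_def)
  then have "(\<Sum>m\<in>vecs_in k I. (\<Prod>j<k. w j (m j)) * of_bool (vec_mod k D m = \<alpha>))
      = (\<Sum>m\<in>vecs_in k I. \<Prod>j<k. w j (m j) * of_bool (m j mod D = \<alpha> j))"
    by (simp add: prod.distrib)
  also have "\<dots> = (\<Prod>j<k. \<Sum>t\<in>I j. w j t * of_bool (t mod D = \<alpha> j))"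
    using fin by (rule sum_vecs_in_prod)
  also have "\<dots> = (\<Prod>j<k. c j / D)"
    using equi \<alpha> by (intro prod.cong refl) (auto simp: equidistributed_mod_def residue_vecs_def)
  finally show ?thesis by (simp add: prod_dividef)
qed

lemma sum_product_weight_vec_mod_in:
  fixes w :: "nat \<Rightarrow> int \<Rightarrow> real"
  assumes fin: "\<And>j. j < k \<Longrightarrow> finite (I j)"
    and equi: "\<And>j. j < k \<Longrightarrow> equidistributed_mod (I j) (w j) (c j) D"
    and \<Omega>: "\<Omega> \<subseteq> residue_vecs k D"
  shows "(\<Sum>m\<in>vecs_in k I. (\<Prod>j<k. w j (m j)) * of_bool (vec_mod k D m \<in> \<Omega>))
    = (\<Prod>j<k. c j) * (card \<Omega> / of_int D ^ k)"
proof -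
  have fin\<Omega>: "finite \<Omega>" using \<Omega> finite_residue_vecs finite_subset by blast
  have "(\<Sum>m\<in>vecs_in k I. (\<Prod>j<k. w j (m j)) * of_bool (vec_mod k D m \<in> \<Omega>))
      = (\<Sum>\<alpha>\<in>\<Omega>. \<Sum>m\<in>vecs_in k I. (\<Prod>j<k. w j (m j)) * of_bool (vec_mod k D m = \<alpha>))"
    unfolding of_bool_mem_eq_sum[OF fin\<Omega>] sum_distrib_left by (rule sum.swap)
  also have "\<dots> = (\<Sum>\<alpha>\<in>\<Omega>. (\<Prod>j<k. c j) / of_int D ^ k)"
    using \<Omega> by (intro sum.cong refl sum_product_weight_vec_mod_eq[OF fin equi]) auto
  finally show ?thesis by simp
qed

lemma sum_product_weight_vec_mod_in_both:
  fixes w :: "nat \<Rightarrow> int \<Rightarrow> real" and P Q :: int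
  assumes fin: "\<And>j. j < k \<Longrightarrow> finite (I j)"
    and PQ: "P > 0" "Q > 0" "coprime P Q"
    and equi: "\<And>j. j < k \<Longrightarrow> equidistributed_mod (I j) (w j) (c j) (P * Q)"
    and \<Omega>P: "\<Omega>P \<subseteq> residue_vecs k P" and \<Omega>Q: "\<Omega>Q \<subseteq> residue_vecs k Q"
  shows "(\<Sum>m\<in>vecs_in k I. (\<Prod>j<k. w j (m j)) * of_bool (vec_mod k P m \<in> \<Omega>P \<and> vec_mod k Q m \<in> \<Omega>Q))
    = (\<Prod>j<k. c j) * (card \<Omega>P / of_int P ^ k) * (card \<Omega>Q / of_int Q ^ k)"
proof -
  have fin\<Omega>: "finite \<Omega>P" "finite \<Omega>Q"
    using \<Omega>P \<Omega>Q finite_residue_vecs finite_subset by blast+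
  have pair: "(\<Sum>m\<in>vecs_in k I. (\<Prod>j<k. w j (m j)) * of_bool (vec_mod k P m = \<alpha> \<and> vec_mod k Q m = \<beta>))
      = (\<Prod>j<k. c j) / of_int (P * Q) ^ k" if "\<alpha> \<in> \<Omega>P" "\<beta> \<in> \<Omega>Q" for \<alpha> \<beta>
  proof -
    obtain x where x: "vec_mod k P x = vec_mod k P \<alpha>" "vec_mod k Q x = vec_mod k Q \<beta>"
      using vec_mod_chinese_remainder[OF PQ(3)] by blast
    have "vec_mod k P m = \<alpha> \<and> vec_mod k Q m = \<beta> \<longleftrightarrow> vec_mod k (P * Q) m = vec_mod k (P * Q) x" for m
      using vec_mod_and_vec_mod_eq_iff[OF PQ(3), of k m x] that \<Omega>P \<Omega>Q
      by (auto simp: x vec_mod_residue_vecs)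
    then show ?thesis
      using PQ by (simp only:) (intro sum_product_weight_vec_mod_eq fin equi vec_mod_in_residue_vecs; simp)
  qed
  have "of_bool (vec_mod k P m \<in> \<Omega>P \<and> vec_mod k Q m \<in> \<Omega>Q)
      = (\<Sum>\<alpha>\<in>\<Omega>P. \<Sum>\<beta>\<in>\<Omega>Q. of_bool (vec_mod k P m = \<alpha> \<and> vec_mod k Q m = \<beta>) :: real)" for m
    unfolding of_bool_conj of_bool_mem_eq_sum[OF fin\<Omega>(1)] of_bool_mem_eq_sum[OF fin\<Omega>(2)]
    by (rule sum_product)
  then have "(\<Sum>m\<in>vecs_in k I. (\<Prod>j<k. w j (m j)) * of_bool (vec_mod k P m \<in> \<Omega>P \<and> vec_mod k Q m \<in> \<Omega>Q))
      = (\<Sum>\<alpha>\<in>\<Omega>P. \<Sum>\<beta>\<in>\<Omega>Q. \<Sum>m\<in>vecs_in k I.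
           (\<Prod>j<k. w j (m j)) * of_bool (vec_mod k P m = \<alpha> \<and> vec_mod k Q m = \<beta>))"
    by (simp only: sum_distrib_left sum.swap[where A = "vecs_in k I"])
  also have "\<dots> = card \<Omega>P * card \<Omega>Q * ((\<Prod>j<k. c j) / of_int (P * Q) ^ k)"
    using pair by simp
  finally show ?thesis by (simp add: power_mult_distrib)
qed

lemma box_equidistributed_majorant:
  fixes M L :: "nat \<Rightarrow> real" and K :: nat
  assumes L: "\<And>j. j < k \<Longrightarrow> L j \<ge> 1" and K: "K > 0"
  obtains I :: "nat \<Rightarrow> int set" and w :: "nat \<Rightarrow> int \<Rightarrow> real" and c :: "nat \<Rightarrow> real"
  where "\<And>j. j < k \<Longrightarrow> finite (I j)" "\<And>j t. j < k \<Longrightarrow> w j t \<ge> 0"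
    "\<And>j. j < k \<Longrightarrow> 0 \<le> c j \<and> c j \<le> 6 * L j"
    "box_points k M L \<subseteq> vecs_in k I"
    "\<And>m. m \<in> box_points k M L \<Longrightarrow> 1 \<le> 6 ^ k * (\<Prod>j<k. w j (m j))"
    "\<And>j D. j < k \<Longrightarrow> D > 0 \<Longrightarrow> D dvd int K \<Longrightarrow> of_int D \<le> L j \<Longrightarrow>
      equidistributed_mod (I j) (w j) (c j) D"
proof -
  define majorant where "majorant j I w c \<longleftrightarrow> finite I \<and> (\<forall>t. w t \<ge> 0) \<and> 0 \<le> c \<and> c \<le> 6 * L j
    \<and> (\<forall>t. M j \<le> of_int t \<and> of_int t \<le> M j + L j \<longrightarrow> t \<in> I \<and> w t \<ge> 1/6)
    \<and> (\<forall>D. D > 0 \<and> D dvd int K \<and> of_int D \<le> L j \<longrightarrow> equidistributed_mod I w c D)"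
    for j I w c
  have "\<exists>I w c. majorant j I w c" if "j < k" for j
    using interval_equidistributed_majorant[OF L[OF that] K, of "M j"]
    unfolding majorant_def by metis
  then obtain I w c where Iwc: "\<And>j. j < k \<Longrightarrow> majorant j (I j) (w j) (c j)" by metis
  show ?thesis
  proof (rule that[of I w c])
    show "box_points k M L \<subseteq> vecs_in k I"
      using Iwc by (auto simp: box_points_def vecs_in_def majorant_def)
    fix m assume m: "m \<in> box_points k M L"
    have "(\<Prod>j<k. 1/6 :: real) \<le> (\<Prod>j<k. w j (m j))"
      using Iwc m by (intro prod_mono) (auto simp: box_points_def majorant_def)
    then show "1 \<le> 6 ^ k * (\<Prod>j<k. w j (m j))"
      by (simp add: power_one_over field_simps)
  qed (use Iwc in \<open>auto simp: majorant_def\<close>)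
qed

lemma product_weight_sieve_variance:
  fixes w :: "nat \<Rightarrow> int \<Rightarrow> real" and Q :: "'a \<Rightarrow> int" and \<Omega> :: "'a \<Rightarrow> (nat \<Rightarrow> int) set"
  assumes S: "finite S" and fin: "\<And>j. j < k \<Longrightarrow> finite (I j)"
    and Q: "\<And>p. p \<in> S \<Longrightarrow> Q p > 0"
    and cop: "\<And>p q. p \<in> S \<Longrightarrow> q \<in> S \<Longrightarrow> p \<noteq> q \<Longrightarrow> coprime (Q p) (Q q)"
    and \<Omega>: "\<And>p. p \<in> S \<Longrightarrow> \<Omega> p \<subseteq> residue_vecs k (Q p)"
    and total: "\<And>j. j < k \<Longrightarrow> (\<Sum>t\<in>I j. w j t) = c j"
    and equi: "\<And>j p. j < k \<Longrightarrow> p \<in> S \<Longrightarrow> equidistributed_mod (I j) (w j) (c j) (Q p)"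
    and equi2: "\<And>j p q. j < k \<Longrightarrow> p \<in> S \<Longrightarrow> q \<in> S \<Longrightarrow> p \<noteq> q \<Longrightarrow>
      equidistributed_mod (I j) (w j) (c j) (Q p * Q q)"
  shows "(\<Sum>m\<in>vecs_in k I. (\<Prod>j<k. w j (m j)) *
            (\<Sum>p\<in>S. of_bool (vec_mod k (Q p) m \<in> \<Omega> p) - card (\<Omega> p) / of_int (Q p) ^ k)\<^sup>2)
    = (\<Prod>j<k. c j) * (\<Sum>p\<in>S. card (\<Omega> p) / of_int (Q p) ^ k * (1 - card (\<Omega> p) / of_int (Q p) ^ k))"
proof (rule weighted_variance_pairwise_independent[OF S])
  show "(\<Sum>m\<in>vecs_in k I. \<Prod>j<k. w j (m j)) = (\<Prod>j<k. c j)"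
    using sum_vecs_in_prod[OF fin, where h = w] total by simp
  show "(\<Sum>m\<in>vecs_in k I. (\<Prod>j<k. w j (m j)) * of_bool (vec_mod k (Q p) m \<in> \<Omega> p))
      = (\<Prod>j<k. c j) * (card (\<Omega> p) / of_int (Q p) ^ k)" if "p \<in> S" for p
    by (rule sum_product_weight_vec_mod_in) (use fin equi \<Omega> that in auto)
  show "(\<Sum>m\<in>vecs_in k I. (\<Prod>j<k. w j (m j)) *
          of_bool (vec_mod k (Q p) m \<in> \<Omega> p \<and> vec_mod k (Q q) m \<in> \<Omega> q))
      = (\<Prod>j<k. c j) * (card (\<Omega> p) / of_int (Q p) ^ k) * (card (\<Omega> q) / of_int (Q q) ^ k)"
    if "p \<in> S" "q \<in> S" "p \<noteq> q" for p q
    by (rule sum_product_weight_vec_mod_in_both) (use fin Q cop equi2 \<Omega> that in auto)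
qed

lemma box_sieve_variance:
  fixes Q :: "'a \<Rightarrow> int" and \<Omega> :: "'a \<Rightarrow> (nat \<Rightarrow> int) set" and M L :: "nat \<Rightarrow> real"
  assumes S: "finite S" and Q: "\<And>p. p \<in> S \<Longrightarrow> Q p > 0"
    and cop: "\<And>p q. p \<in> S \<Longrightarrow> q \<in> S \<Longrightarrow> p \<noteq> q \<Longrightarrow> coprime (Q p) (Q q)"
    and \<Omega>: "\<And>p. p \<in> S \<Longrightarrow> \<Omega> p \<subseteq> residue_vecs k (Q p)"
    and small: "\<And>j p q. j < k \<Longrightarrow> p \<in> S \<Longrightarrow> q \<in> S \<Longrightarrow> of_int (Q p * Q q) \<le> L j"
  shows "(\<Sum>m\<in>box_points k M L.
            (\<Sum>p\<in>S. of_bool (vec_mod k (Q p) m \<in> \<Omega> p) - card (\<Omega> p) / of_int (Q p) ^ k)\<^sup>2)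
    \<le> 36 ^ k * (\<Prod>j<k. L j) * (\<Sum>p\<in>S. card (\<Omega> p) / of_int (Q p) ^ k)"
proof (cases "S = {}")
  case False
  define \<omega> where "\<omega> p = card (\<Omega> p) / of_int (Q p) ^ k" for p
  define dev where "dev m = (\<Sum>p\<in>S. of_bool (vec_mod k (Q p) m \<in> \<Omega> p) - \<omega> p)" for m
  define K where "K = nat (\<Prod>p\<in>S. Q p)"
  have K: "K > 0" and K_eq: "int K = (\<Prod>p\<in>S. Q p)"
    using Q by (simp_all add: K_def prod_pos less_imp_le)
  have mod_le: "of_int (Q p) \<le> L j" if "j < k" "p \<in> S" for j p
    using small[OF that that(2)] Q[OF that(2)] by (smt (verit) mult_le_cancel_left1 of_int_le_iff)
  have L: "L j \<ge> 1" if "j < k" for j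
    using False mod_le[OF that] Q by (force simp: int_one_le_iff_zero_less)
  obtain I w c where fin: "\<And>j. j < k \<Longrightarrow> finite (I j)" and w: "\<And>j t. j < k \<Longrightarrow> w j t \<ge> 0"
    and c: "\<And>j. j < k \<Longrightarrow> 0 \<le> c j \<and> c j \<le> 6 * L j"
    and box: "box_points k M L \<subseteq> vecs_in k I"
    and w_box: "\<And>m. m \<in> box_points k M L \<Longrightarrow> 1 \<le> 6 ^ k * (\<Prod>j<k. w j (m j))"
    and equi: "\<And>j D. j < k \<Longrightarrow> D > 0 \<Longrightarrow> D dvd int K \<Longrightarrow> of_int D \<le> L j \<Longrightarrow>
      equidistributed_mod (I j) (w j) (c j) D"
    using box_equidistributed_majorant[where k = k and L = L and M = M, OF L K] by blast
  have variance: "(\<Sum>m\<in>vecs_in k I. (\<Prod>j<k. w j (m j)) * (dev m)\<^sup>2)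
      = (\<Prod>j<k. c j) * (\<Sum>p\<in>S. \<omega> p * (1 - \<omega> p))"
    unfolding dev_def \<omega>_def
  proof (rule product_weight_sieve_variance[OF S fin Q cop \<Omega>])
    show "(\<Sum>t\<in>I j. w j t) = c j" if "j < k" for j
      using equi[OF that, of 1] L[OF that] by (simp add: equidistributed_mod_one_iff)
    show "equidistributed_mod (I j) (w j) (c j) (Q p)" if "j < k" "p \<in> S" for j p
      using that S Q K_eq mod_le by (intro equi) (auto intro: dvd_prodI)
    show "equidistributed_mod (I j) (w j) (c j) (Q p * Q q)"
      if "j < k" "p \<in> S" "q \<in> S" "p \<noteq> q" for j p q
    proof (intro equi that small)
      show "Q p * Q q > 0" using that Q by simp
      have "Q p * Q q = (\<Prod>r\<in>{p, q}. Q r)" using that by simp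
      also have "\<dots> dvd int K" unfolding K_eq using that S by (intro prod_dvd_prod_subset) auto
      finally show "Q p * Q q dvd int K" .
    qed
  qed
  have "(\<Sum>m\<in>box_points k M L. (dev m)\<^sup>2)
      \<le> 6 ^ k * (\<Sum>m\<in>vecs_in k I. (\<Prod>j<k. w j (m j)) * (dev m)\<^sup>2)"
    using box w_box fin w
    by (intro sum_le_mult_weighted_sum) (auto simp: finite_vecs_in intro!: prod_nonneg)
  also have "\<dots> = 6 ^ k * ((\<Prod>j<k. c j) * (\<Sum>p\<in>S. \<omega> p * (1 - \<omega> p)))"
    unfolding variance ..
  also have "\<dots> \<le> 6 ^ k * ((\<Prod>j<k. c j) * (\<Sum>p\<in>S. \<omega> p))"
    using c by (intro mult_left_mono sum_mono prod_nonneg) (auto simp: algebra_simps)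
  also have "\<dots> \<le> 6 ^ k * ((\<Prod>j<k. 6 * L j) * (\<Sum>p\<in>S. \<omega> p))"
    using c Q by (intro mult_left_mono mult_right_mono prod_mono sum_nonneg)
      (auto simp: \<omega>_def less_imp_le intro!: divide_nonneg_nonneg)
  also have "\<dots> = 36 ^ k * (\<Prod>j<k. L j) * (\<Sum>p\<in>S. \<omega> p)"
    by (simp add: prod.distrib power_mult_distrib[symmetric])
  finally show ?thesis unfolding dev_def \<omega>_def .
qed simp

lemma finite_primes_le: "finite {p::nat. prime p \<and> real p \<le> x}"
  by (rule finite_subset[of _ "{..nat \<lfloor>x\<rfloor>}"]) (auto simp: le_nat_floor)

lemma Pexp_eq_sum:
  "Pexp k N \<Omega> x = (\<Sum>p | prime p \<and> real p \<le> x. card (\<Omega> p) / of_int (int p ^ N) ^ k)"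
  unfolding Pexp_def by (simp add: power_mult)

lemma Pcount_minus_Pexp:
  "real (Pcount k N \<Omega> x m) - Pexp k N \<Omega> x
    = (\<Sum>p | prime p \<and> real p \<le> x.
         of_bool (vec_mod k (int p ^ N) m \<in> \<Omega> p) - card (\<Omega> p) / of_int (int p ^ N) ^ k)"
proof -
  have "real (Pcount k N \<Omega> x m)
      = (\<Sum>p | prime p \<and> real p \<le> x. of_bool (vec_mod k (int p ^ N) m \<in> \<Omega> p))"
    unfolding Pcount_def using finite_primes_le[of x] by (simp add: Int_def conj_assoc)
  then show ?thesis unfolding Pexp_eq_sum by (simp add: sum_subtractf)
qed

theorem theorem5p3:
  fixes k N :: nat
  assumes "k \<ge> 1" and "N \<ge> 1"
  shows "\<exists>c>0. \<forall>(\<Omega> :: nat \<Rightarrow> (nat \<Rightarrow> int) set) (x::real) (M::nat \<Rightarrow> real) (L::nat \<Rightarrow> real).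
           (\<forall>p. prime p \<longrightarrow> \<Omega> p \<subseteq> residue_vecs k (int p ^ N)) \<longrightarrow>
           x > 0 \<longrightarrow>
           (\<forall>j<k. L j \<ge> x ^ (2 * N)) \<longrightarrow>
           (\<Sum>m\<in>box_points k M L. (real (Pcount k N \<Omega> x m) - Pexp k N \<Omega> x)\<^sup>2)
             \<le> c * (\<Prod>j<k. L j) * Pexp k N \<Omega> x"
proof (intro exI[of _ "36 ^ k"] conjI allI impI)
  fix \<Omega> :: "nat \<Rightarrow> (nat \<Rightarrow> int) set" and x :: real and M L :: "nat \<Rightarrow> real"
  assume \<Omega>: "\<forall>p. prime p \<longrightarrow> \<Omega> p \<subseteq> residue_vecs k (int p ^ N)"
    and L: "\<forall>j<k. L j \<ge> x ^ (2 * N)"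
  let ?S = "{p::nat. prime p \<and> real p \<le> x}"
  have moduli_le: "of_int (int p ^ N * int q ^ N) \<le> L j" if "j < k" "p \<in> ?S" "q \<in> ?S" for j p q
  proof -
    have "of_int (int p ^ N * int q ^ N) = (real p * real q) ^ N" by (simp add: power_mult_distrib)
    also have "\<dots> \<le> (x * x) ^ N" using that by (intro power_mono mult_mono) auto
    also have "\<dots> \<le> L j" using L that by (simp add: power_mult power2_eq_square power_mult_distrib)
    finally show ?thesis .
  qed
  show "(\<Sum>m\<in>box_points k M L. (real (Pcount k N \<Omega> x m) - Pexp k N \<Omega> x)\<^sup>2)
      \<le> 36 ^ k * (\<Prod>j<k. L j) * Pexp k N \<Omega> x"
    unfolding Pcount_minus_Pexp unfolding Pexp_eq_sum
    using finite_primes_le \<Omega> moduli_le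
    by (intro box_sieve_variance) (auto simp: prime_gt_0_nat primes_coprime)
qed simp

end
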